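(* Consider any sub-auction (upper level or lower level) of the hierarchical auction, run either with Rule A (exact winner determination with price $\max\{q^{\mathrm{base}},q^{\mathrm{vcg}}\}$) or with Rule B (greedy winner determination with price $\max\{q^{\mathrm{base}},q^{\mathrm{greedy}}\}$), as defined in the context. Then the mechanism is individually rational for truthful bidders: every bidder $k$ that bids truthfully ($b_k(S)=v_k(S)$ for all $S\in\mathcal{B}_k$) obtains utility $u_k\ge 0$; that is, if $k$ wins bundle $S_k$ and is charged $q_k$, then $v_k(S_k)-q_k\ge 0$ (a losing bidder pays nothing and has utility $0$).
   Context: Sub-auction model. There are $R$ resource types and an integer capacity vector $Q\in\mathbb{Z}_{\ge0}^R$ held by a single seller (who is also the auctioneer). In the hierarchical auction, the upper-level sub-auction has the infrastructure provider as seller with $R=3$ (subchannels, discretized power units, antennas) and capacities equal to the leftover (non-reserved) resources, the bidders being the virtual network operators; each lower-level sub-auction has one virtual network operator as seller with $R=2$ and capacities $(\hat C_m J,\hat P_m)$ (available subchannels times maximal number $J$ of users per subchannel, and available power units), the bidders being its users. Both levels are instances of the following model. Each bidder $i$ in a finite set $N$ submits an XOR bid: a finite set $\mathcal{B}_i\subset\mathbb{Z}_{\ge0}^R\setminus\{0\}$ of bundles and a bid value $b_i(S)\ge 0$ for each $S\in\mathcal{B}_i$ (a single-minded bidder has $|\mathcal{B}_i|=1$). A feasible allocation is $x=(x_i(S))$ with $x_i(S)\in\{0,1\}$, $\sum_{S\in\mathcal{B}_i}x_i(S)\le1$ for each $i$, and $\sum_i\sum_{S}x_i(S)\,S\le Q$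 componentwise; bidder $i$ wins $S$ if $x_i(S)=1$. Bidder $i$ has a private valuation $v_i:\mathcal{B}_i\to\mathbb{R}_{\ge0}$; its utility is $u_i=v_i(S_i)-q_i$ if it wins $S_i$ and is charged $q_i$, and $u_i=0$ if it wins nothing (losers are not charged). Base price: there is a vector $\beta\in\mathbb{R}_{\ge0}^R$ of per-unit base access prices, known to all, and $q^{\mathrm{base}}(S)=\beta\cdot S$. Standing assumption: a bidder places a bid on a bundle $S$ only if $v_i(S)\ge q^{\mathrm{base}}(S)$. Rule A: the allocation $x^*$ maximizes $\sum_i\sum_S b_i(S)x_i(S)$ over feasible allocations; with $W$ its optimal value and $W_{-k}$ the optimal value of the same problem with bidder $k$ removed, a winner $k$ of bundle $S_k$ is charged $q_k=\max\{q^{\mathrm{base}}(S_k),q_k^{\mathrm{vcg}}\}$ where $q_k^{\mathrm{vcg}}=W_{-k}-(W-b_k(S_k))$. Rule B: fix weights $\omega\in\mathbb{R}_{>0}^R$ and let $|S|=\omega\cdot S$. List all pairs $(i,S)$ with $S\in\mathcal{B}_i$ in nonincreasing order of $b_i(S)/\sqrt{|S|}$ (ties broken by a fixed rule); scanning the list, accept pair $(i,S)$ (bidder $i$ wins $S$) iff $i$ has not yet won a bundle and $S$ fits in the remaining capacity, and then subtract $S$ from the remaining capacity. For a winner $k$ of $S_k$, let $\mathbb{B}_k$ be the set of pairs $(j,T)$, $j\neq k$, such that $j$ wins nothing in this run but the same greedy procedure run on the bids of all bidders except $k$ accepts $(j,T)$ (bidder $k$ "uniquely blocks" $j$). Then $q_k^{\mathrm{greedy}}=\max_{(j,T)\in\mathbb{B}_k}\frac{b_j(T)}{\sqrt{|T|}}\sqrt{|S_k|}$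 (taken as $0$ if $\mathbb{B}_k=\emptyset$) and $k$ is charged $q_k=\max\{q^{\mathrm{base}}(S_k),q_k^{\mathrm{greedy}}\}$. *)

theory Defs
  imports Complex_Main
begin

(* Resource types are indexed by a finite type 'r (R = CARD('r)); a bundle / capacity
   vector is a function 'r => nat.  Bidders have type 'b; an allocation maps each
   bidder to the bundle it wins (None = wins nothing). *)

type_synonym 'r rbundle = "'r \<Rightarrow> nat"

definition base_price :: "('r::finite \<Rightarrow> real) \<Rightarrow> 'r rbundle \<Rightarrow> real" where
  "base_price \<beta> S = (\<Sum>r\<in>UNIV. \<beta> r * real (S r))"

definition feasible ::
  "'b set \<Rightarrow> ('b \<Rightarrow> 'r rbundle set) \<Rightarrow> 'r rbundle \<Rightarrow> ('b \<Rightarrow> 'r rbundle option) \<Rightarrow> bool" where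
  "feasible N B Q x \<longleftrightarrow>
     (\<forall>i S. x i = Some S \<longrightarrow> i \<in> N \<and> S \<in> B i) \<and>
     (\<forall>r. (\<Sum>i\<in>{i\<in>N. x i \<noteq> None}. the (x i) r) \<le> Q r)"

definition welfare :: "'b set \<Rightarrow> ('b \<Rightarrow> 'r rbundle \<Rightarrow> real) \<Rightarrow> ('b \<Rightarrow> 'r rbundle option) \<Rightarrow> real" where
  "welfare N b x = (\<Sum>i\<in>N. case x i of None \<Rightarrow> 0 | Some S \<Rightarrow> b i S)"

definition opt_welfare ::
  "'b set \<Rightarrow> ('b \<Rightarrow> 'r rbundle set) \<Rightarrow> ('b \<Rightarrow> 'r rbundle \<Rightarrow> real) \<Rightarrow> 'r rbundle \<Rightarrow> real" where
  "opt_welfare N B b Q = Max (welfare N b ` {x. feasible N B Q x})"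

definition vcg_payment ::
  "'b set \<Rightarrow> ('b \<Rightarrow> 'r rbundle set) \<Rightarrow> ('b \<Rightarrow> 'r rbundle \<Rightarrow> real) \<Rightarrow> 'r rbundle
     \<Rightarrow> ('b \<Rightarrow> 'r rbundle option) \<Rightarrow> 'b \<Rightarrow> real" where
  "vcg_payment N B b Q x k =
     opt_welfare (N - {k}) B b Q - (opt_welfare N B b Q - b k (the (x k)))"

definition ruleA_price ::
  "('r::finite \<Rightarrow> real) \<Rightarrow> 'b set \<Rightarrow> ('b \<Rightarrow> 'r rbundle set) \<Rightarrow> ('b \<Rightarrow> 'r rbundle \<Rightarrow> real)
     \<Rightarrow> 'r rbundle \<Rightarrow> ('b \<Rightarrow> 'r rbundle option) \<Rightarrow> 'b \<Rightarrow> real" where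
  "ruleA_price \<beta> N B b Q x k = max (base_price \<beta> (the (x k))) (vcg_payment N B b Q x k)"

definition wsize :: "('r::finite \<Rightarrow> real) \<Rightarrow> 'r rbundle \<Rightarrow> real" where
  "wsize \<omega> S = (\<Sum>r\<in>UNIV. \<omega> r * real (S r))"

definition ratio :: "('b \<Rightarrow> 'r rbundle \<Rightarrow> real) \<Rightarrow> ('r::finite \<Rightarrow> real) \<Rightarrow> 'b \<times> 'r rbundle \<Rightarrow> real" where
  "ratio b \<omega> p = b (fst p) (snd p) / sqrt (wsize \<omega> (snd p))"

(* the list of all bid pairs, in nonincreasing order of b_i(S)/sqrt|S|; its order among
   ties is the fixed tie-breaking rule *)
definition greedy_list_ok ::
  "'b set \<Rightarrow> ('b \<Rightarrow> 'r rbundle set) \<Rightarrow> ('b \<Rightarrow> 'r rbundle \<Rightarrow> real) \<Rightarrow> ('r::finite \<Rightarrow> real)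
     \<Rightarrow> ('b \<times> 'r rbundle) list \<Rightarrow> bool" where
  "greedy_list_ok N B b \<omega> L \<longleftrightarrow>
     distinct L \<and> set L = {(i, S). i \<in> N \<and> S \<in> B i} \<and>
     sorted_wrt (\<lambda>p q. ratio b \<omega> q \<le> ratio b \<omega> p) L"

fun greedy_run ::
  "('b \<times> 'r rbundle) list \<Rightarrow> 'r rbundle \<Rightarrow> ('b \<Rightarrow> 'r rbundle option) \<Rightarrow> ('b \<Rightarrow> 'r rbundle option)" where
  "greedy_run [] cap w = w"
| "greedy_run ((i, S) # L) cap w =
     (if w i = None \<and> (\<forall>r. S r \<le> cap r)
      then greedy_run L (\<lambda>r. cap r - S r) (w(i := Some S))
      else greedy_run L cap w)"

definition greedy_alloc :: "('b \<times> 'r rbundle) list \<Rightarrow> 'r rbundle \<Rightarrow> ('b \<Rightarrow> 'r rbundle option)" where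
  "greedy_alloc L Q = greedy_run L Q (\<lambda>_. None)"

definition blocked :: "('b \<times> 'r rbundle) list \<Rightarrow> 'r rbundle \<Rightarrow> 'b \<Rightarrow> ('b \<times> 'r rbundle) set" where
  "blocked L Q k = {(j, T). j \<noteq> k \<and> greedy_alloc L Q j = None \<and>
                      greedy_alloc (filter (\<lambda>p. fst p \<noteq> k) L) Q j = Some T}"

definition greedy_payment ::
  "('b \<Rightarrow> 'r rbundle \<Rightarrow> real) \<Rightarrow> ('r::finite \<Rightarrow> real) \<Rightarrow> ('b \<times> 'r rbundle) list \<Rightarrow> 'r rbundle
     \<Rightarrow> 'b \<Rightarrow> real" where
  "greedy_payment b \<omega> L Q k =
     (let Sk = the (greedy_alloc L Q k) in
      if blocked L Q k = {} then 0
      else Max ((\<lambda>(j, T). b j T / sqrt (wsize \<omega> T) * sqrt (wsize \<omega> Sk)) ` blocked L Q k))"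

definition ruleB_price ::
  "('r::finite \<Rightarrow> real) \<Rightarrow> ('b \<Rightarrow> 'r rbundle \<Rightarrow> real) \<Rightarrow> ('r \<Rightarrow> real) \<Rightarrow> ('b \<times> 'r rbundle) list
     \<Rightarrow> 'r rbundle \<Rightarrow> 'b \<Rightarrow> real" where
  "ruleB_price \<beta> b \<omega> L Q k =
     max (base_price \<beta> (the (greedy_alloc L Q k))) (greedy_payment b \<omega> L Q k)"

end

theory Submission
  imports Defs
begin

text \<open>Individual rationality reduces to showing that both components of the price are at most the
truthful bid. The base price is covered by the standing assumption. For Rule A, removing bidder k
can only shrink the set of feasible allocations, so W_{-k} \<le> W and hence the VCG price is at most
b_k(S_k). For Rule B, every pair uniquely blocked by k must come after k's winning pair in the
sorted list, since up to that point the runs with and without k coincide; so its ratio b_j(T)/sqrt|T| is at most that of k, and the critical price is at most b_k(S_k).\<close>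

lemma finite_feasible:
  assumes "finite N" "\<forall>i\<in>N. finite (B i)"
  shows "finite {x. feasible N B Q x}"
proof -
  let ?D = "insert None (Some ` (\<Union>i\<in>N. B i))"
  let ?F = "{f. \<forall>i. (i \<in> N \<longrightarrow> f i \<in> ?D) \<and> (i \<notin> N \<longrightarrow> f i = None)}"
  have "finite ?F"
    using assms by (intro finite_set_of_finite_funs) auto
  moreover have "{x. feasible N B Q x} \<subseteq> ?F"
  proof
    fix x assume "x \<in> {x. feasible N B Q x}"
    hence "\<forall>i S. x i = Some S \<longrightarrow> i \<in> N \<and> S \<in> B i" unfolding feasible_def by blast
    hence "x i \<in> ?D" "i \<notin> N \<Longrightarrow> x i = None" for i by (cases "x i"; auto)+
    thus "x \<in> ?F" by blast
  qed
  ultimately show ?thesis by (rule finite_subset[rotated])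
qed

lemma feasible_remove_bidder:
  assumes "feasible (N - {k}) B Q y"
  shows "feasible N B Q y" and "y k = None"
proof -
  have alloc: "\<forall>i S. y i = Some S \<longrightarrow> i \<in> N - {k} \<and> S \<in> B i"
    and cap: "\<forall>r. (\<Sum>i\<in>{i\<in>N-{k}. y i \<noteq> None}. the (y i) r) \<le> Q r"
    using assms unfolding feasible_def by blast+
  show yk: "y k = None" using alloc by (cases "y k") auto
  hence "{i\<in>N-{k}. y i \<noteq> None} = {i\<in>N. y i \<noteq> None}" by auto
  thus "feasible N B Q y" unfolding feasible_def using alloc cap by auto
qed

lemma welfare_remove_bidder:
  assumes "finite N" "k \<in> N" "y k = None"
  shows "welfare (N - {k}) b y = welfare N b y"
  unfolding welfare_def sum.remove[OF assms(1,2)] using assms(3) by simp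

lemma opt_welfare_le:
  assumes "finite N" "\<forall>i\<in>N. finite (B i)" "feasible N B Q x"
  shows "welfare N b x \<le> opt_welfare N B b Q"
  unfolding opt_welfare_def using finite_feasible[OF assms(1,2)] assms(3) by (intro Max_ge) auto

lemma opt_welfare_remove_bidder_le:
  assumes finN: "finite N" and finB: "\<forall>i\<in>N. finite (B i)" and kN: "k \<in> N"
  shows "opt_welfare (N - {k}) B b Q \<le> opt_welfare N B b Q"
proof -
  have "feasible (N - {k}) B Q (\<lambda>_. None)" unfolding feasible_def by simp
  moreover have "finite {y. feasible (N - {k}) B Q y}"
    using finN finB by (intro finite_feasible) auto
  moreover have "welfare (N - {k}) b y \<le> opt_welfare N B b Q" if "feasible (N - {k}) B Q y" for y
    using that feasible_remove_bidder[OF that] welfare_remove_bidder[OF finN kN]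
      opt_welfare_le[OF finN finB] by metis
  ultimately show ?thesis unfolding opt_welfare_def[of "N - {k}"] by (subst Max_le_iff) auto
qed

lemma vcg_payment_le_bid:
  assumes "finite N" "\<forall>i\<in>N. finite (B i)" "k \<in> N"
    and "welfare N b x = opt_welfare N B b Q"
  shows "vcg_payment N B b Q x k \<le> b k (the (x k))"
  using opt_welfare_remove_bidder_le[OF assms(1-3), of b Q] unfolding vcg_payment_def by simp

lemma greedy_run_keeps_winner: "w i = Some S \<Longrightarrow> greedy_run L cap w i = Some S"
proof (induction L cap w rule: greedy_run.induct)
  case (2 i' S' L cap w)
  thus ?case by (cases "i = i'") (auto simp: fun_upd_def)
qed simp

lemma greedy_run_None: "greedy_run L cap w i = None \<Longrightarrow> w i = None"
  using greedy_run_keeps_winner by (cases "w i") fastforce+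

lemma greedy_run_Some_in_list:
  "greedy_run L cap w i = Some S \<Longrightarrow> w i = Some S \<or> (i, S) \<in> set L"
  by (induction L cap w rule: greedy_run.induct) (auto split: if_splits)

lemma greedy_alloc_Some_in_list: "greedy_alloc L Q i = Some S \<Longrightarrow> (i, S) \<in> set L"
  using greedy_run_Some_in_list unfolding greedy_alloc_def by fastforce

text \<open>The run on the full list (state w) and the run without bidder k (state w') are compared
under the invariant that they agree off k and k has not won yet; as long as k's winning pair has
not been reached, each step preserves it.\<close>

lemma greedy_run_blocked_after_winner:
  assumes "greedy_run L cap w k = Some Sk" "w k = None" "\<forall>i. i \<noteq> k \<longrightarrow> w i = w' i"
    and "greedy_run L cap w j = None"
    and "greedy_run (filter (\<lambda>p. fst p \<noteq> k) L) cap w' j = Some T"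
  shows "\<exists>L1 L2. L = L1 @ (k, Sk) # L2 \<and> (j, T) \<in> set L2"
  using assms
proof (induction L arbitrary: cap w w')
  case Nil thus ?case by simp
next
  case (Cons p L)
  obtain i S where p: "p = (i, S)" by fastforce
  let ?del = "filter (\<lambda>p. fst p \<noteq> k)"
  show ?case
  proof (cases "i = k \<and> (\<forall>r. S r \<le> cap r)")
    case True
    hence run: "greedy_run (p # L) cap w = greedy_run L (\<lambda>r. cap r - S r) (w(k := Some S))"
      using p Cons.prems(2) by simp
    have "Sk = S"
      using Cons.prems(1) run greedy_run_keeps_winner[of "w(k := Some S)" k S] by simp
    have "j \<noteq> k"
      using Cons.prems(1,4) by auto
    hence "w' j = None"
      using Cons.prems(3,4) run greedy_run_None[of L _ "w(k := Some S)" j] by fastforce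
    moreover have "?del (p # L) = ?del L" using p True by simp
    ultimately have "(j, T) \<in> set L"
      using Cons.prems(5) greedy_run_Some_in_list by fastforce
    thus ?thesis using p True \<open>Sk = S\<close> by (intro exI[of _ "[]"] exI[of _ L]) simp
  next
    case False
    obtain cap1 w1 w1' where
      run: "greedy_run (p # L) cap w = greedy_run L cap1 w1" and
      run': "greedy_run (?del (p # L)) cap w' = greedy_run (?del L) cap1 w1'" and
      inv: "w1 k = None" "\<forall>i. i \<noteq> k \<longrightarrow> w1 i = w1' i"
    proof (cases "i \<noteq> k \<and> w i = None \<and> (\<forall>r. S r \<le> cap r)")
      case True
      with Cons.prems(3) have "w' i = None" by auto
      with True p Cons.prems(2,3) show ?thesis
        by (intro that[of "\<lambda>r. cap r - S r" "w(i := Some S)" "w'(i := Some S)"]) auto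
    next
      case rejected: False
      show ?thesis
      proof (cases "i = k")
        case True
        with p False show ?thesis by (intro that[of cap w w']) (use Cons.prems(2,3) in auto)
      next
        case False
        with Cons.prems(3) have "w i = w' i" by auto
        with False p rejected show ?thesis
          by (intro that[of cap w w']) (use Cons.prems(2,3) in auto)
      qed
    qed
    then obtain L1 L2 where "L = L1 @ (k, Sk) # L2 \<and> (j, T) \<in> set L2"
      using Cons.IH[of cap1 w1 w1'] Cons.prems run run' by auto
    thus ?thesis by (intro exI[of _ "p # L1"] exI[of _ L2]) simp
  qed
qed

lemma blocked_subset_list: "blocked L Q k \<subseteq> set L"
  unfolding blocked_def using greedy_alloc_Some_in_list by fastforce

lemma blocked_ratio_le_winner:
  assumes sorted: "sorted_wrt (\<lambda>p q. ratio b \<omega> q \<le> ratio b \<omega> p) L"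
    and win: "greedy_alloc L Q k = Some Sk" and jT: "(j, T) \<in> blocked L Q k"
  shows "ratio b \<omega> (j, T) \<le> ratio b \<omega> (k, Sk)"
proof -
  obtain L1 L2 where L: "L = L1 @ (k, Sk) # L2" and "(j, T) \<in> set L2"
    using greedy_run_blocked_after_winner[of L Q "\<lambda>_. None" k Sk "\<lambda>_. None" j T] win jT
    unfolding blocked_def greedy_alloc_def by auto
  moreover have "sorted_wrt (\<lambda>p q. ratio b \<omega> q \<le> ratio b \<omega> p) ((k, Sk) # L2)"
    using sorted L sorted_wrt_append by blast
  ultimately show ?thesis by simp
qed

lemma wsize_pos:
  assumes "\<forall>r. \<omega> r > 0" "S \<noteq> (\<lambda>_. 0)"
  shows "wsize \<omega> S > 0"
proof -
  obtain r0 where "S r0 \<noteq> 0" using assms(2) by auto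
  hence "0 < \<omega> r0 * real (S r0)" using assms(1) by simp
  thus ?thesis unfolding wsize_def
    using assms(1) by (intro sum_pos2[of UNIV r0]) (auto simp: less_imp_le)
qed

lemma greedy_payment_le_bid:
  assumes pos: "\<forall>r. \<omega> r > 0" and sorted: "sorted_wrt (\<lambda>p q. ratio b \<omega> q \<le> ratio b \<omega> p) L"
    and win: "greedy_alloc L Q k = Some Sk" and nz: "Sk \<noteq> (\<lambda>_. 0)" and bid: "b k Sk \<ge> 0"
  shows "greedy_payment b \<omega> L Q k \<le> b k Sk"
proof (cases "blocked L Q k = {}")
  case True
  thus ?thesis unfolding greedy_payment_def using bid by simp
next
  case False
  have wpos: "wsize \<omega> Sk > 0" using wsize_pos[OF pos nz] .
  have "b j T / sqrt (wsize \<omega> T) * sqrt (wsize \<omega> Sk) \<le> b k Sk" if "(j, T) \<in> blocked L Q k" for j T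
  proof -
    have "b j T / sqrt (wsize \<omega> T) \<le> b k Sk / sqrt (wsize \<omega> Sk)"
      using blocked_ratio_le_winner[OF sorted win that] unfolding ratio_def by simp
    hence "b j T / sqrt (wsize \<omega> T) * sqrt (wsize \<omega> Sk) \<le> b k Sk / sqrt (wsize \<omega> Sk) * sqrt (wsize \<omega> Sk)"
      by (rule mult_right_mono) (use wpos in simp)
    thus ?thesis using wpos by simp
  qed
  moreover have "finite (blocked L Q k)"
    using finite_subset[OF blocked_subset_list] by simp
  ultimately have "Max ((\<lambda>(j, T). b j T / sqrt (wsize \<omega> T) * sqrt (wsize \<omega> Sk)) ` blocked L Q k)
      \<le> b k Sk"
    using False by (intro Max.boundedI) auto
  thus ?thesis unfolding greedy_payment_def Let_def using False win by simp
qed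

theorem theorem3p1:
  fixes N :: "'b set" and B :: "'b \<Rightarrow> ('r::finite \<Rightarrow> nat) set"
    and b v :: "'b \<Rightarrow> ('r \<Rightarrow> nat) \<Rightarrow> real"
    and \<beta> :: "'r \<Rightarrow> real" and Q :: "'r \<Rightarrow> nat" and k :: 'b
  assumes finN: "finite N"
    and finB: "\<forall>i\<in>N. finite (B i)"
    and nonzero: "\<forall>i\<in>N. \<forall>S\<in>B i. S \<noteq> (\<lambda>_. 0)"
    and bid_nonneg: "\<forall>i\<in>N. \<forall>S\<in>B i. b i S \<ge> 0"
    and val_nonneg: "\<forall>i\<in>N. \<forall>S\<in>B i. v i S \<ge> 0"
    and beta_nonneg: "\<forall>r. \<beta> r \<ge> 0"
    and standing: "\<forall>i\<in>N. \<forall>S\<in>B i. v i S \<ge> base_price \<beta> S"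
    and kN: "k \<in> N"
    and truthful: "\<forall>S\<in>B k. b k S = v k S"
  shows "(\<forall>x Sk. feasible N B Q x \<and> welfare N b x = opt_welfare N B b Q \<and> x k = Some Sk
             \<longrightarrow> v k Sk - ruleA_price \<beta> N B b Q x k \<ge> 0)
       \<and> (\<forall>\<omega> L Sk. (\<forall>r. \<omega> r > 0) \<and> greedy_list_ok N B b \<omega> L \<and> greedy_alloc L Q k = Some Sk
             \<longrightarrow> v k Sk - ruleB_price \<beta> b \<omega> L Q k \<ge> 0)"
proof (intro conjI allI impI)
  fix x Sk
  assume x: "feasible N B Q x \<and> welfare N b x = opt_welfare N B b Q \<and> x k = Some Sk"
  hence "Sk \<in> B k" unfolding feasible_def by blast
  moreover have "vcg_payment N B b Q x k \<le> b k Sk"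
    using vcg_payment_le_bid[OF finN finB kN] x by fastforce
  ultimately show "v k Sk - ruleA_price \<beta> N B b Q x k \<ge> 0"
    using standing kN truthful x unfolding ruleA_price_def by simp
next
  fix \<omega> L Sk
  assume a: "(\<forall>r. \<omega> r > (0::real)) \<and> greedy_list_ok N B b \<omega> L \<and> greedy_alloc L Q k = Some Sk"
  hence "Sk \<in> B k"
    using greedy_alloc_Some_in_list[of L Q k Sk] unfolding greedy_list_ok_def by auto
  moreover have "greedy_payment b \<omega> L Q k \<le> b k Sk"
    using a calculation nonzero bid_nonneg kN unfolding greedy_list_ok_def
    by (intro greedy_payment_le_bid) auto
  ultimately show "v k Sk - ruleB_price \<beta> b \<omega> L Q k \<ge> 0"
    using standing kN truthful a unfolding ruleB_price_def by simp
qed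

end
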